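(* Let $\delta:G_0\to G_1$ be an open continuous homomorphism of profinite groups with finite kernel. Let $H$ be a closed subgroup of $G_1$ and $\rho:H\to G_0$ a continuous homomorphism with $\delta\circ\rho$ equal to the inclusion $H\hookrightarrow G_1$. Then there exist an open subgroup $U\subset G_1$ containing $H$ and a continuous homomorphism $\rho':U\to G_0$ such that $\rho'|_H=\rho$ and $\delta\circ\rho'$ is the inclusion $U\hookrightarrow G_1$. *)

theory Defs
  imports "HOL-Analysis.Analysis" "HOL-Algebra.Algebra"
begin

definition topological_group :: "'a monoid \<Rightarrow> 'a topology \<Rightarrow> bool" where
  "topological_group G T \<longleftrightarrow>
     group G \<and> topspace T = carrier G \<and>
     continuous_map (prod_topology T T) T (\<lambda>(x, y). x \<otimes>\<^bsub>G\<^esub> y) \<and>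
     continuous_map T T (\<lambda>x. inv\<^bsub>G\<^esub> x)"

definition totally_disconnected_space :: "'a topology \<Rightarrow> bool" where
  "totally_disconnected_space T \<longleftrightarrow>
     (\<forall>S. connectedin T S \<longrightarrow> (\<forall>x\<in>S. \<forall>y\<in>S. x = y))"

definition profinite_group :: "'a monoid \<Rightarrow> 'a topology \<Rightarrow> bool" where
  "profinite_group G T \<longleftrightarrow>
     topological_group G T \<and> compact_space T \<and> Hausdorff_space T \<and>
     totally_disconnected_space T"

end

theory Submission
  imports Defs
begin

text \<open>Let \<open>S = \<rho>(H)\<close>, a compact subgroup of \<open>G\<^sub>0\<close> meeting the finite kernel of \<open>\<delta>\<close> only in \<open>1\<close>.
  In a profinite group a compact subgroup can be separated from a finite set disjoint from it
  by an open subgroup \<open>V \<supseteq> S\<close>. Then \<open>\<delta>\<close> is injective on \<open>V\<close>, and since \<open>\<delta>\<close> is open,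
  \<open>U = \<delta>(V)\<close> is an open subgroup of \<open>G\<^sub>1\<close> containing \<open>H\<close> on which the inverse of \<open>\<delta>|\<^sub>V\<close>
  is a continuous homomorphism extending \<open>\<rho>\<close>.\<close>

lemma clopen_separating_compact:
  assumes "compact_space T" "Hausdorff_space T" "totally_disconnected_space T"
    and "x \<in> topspace T" "compactin T F" "x \<notin> F"
  obtains C where "openin T C" "closedin T C" "x \<in> C" "C \<inter> F = {}"
proof -
  have "quasi_component_of_set T x \<in> connected_components_of T"
    using assms(1,2,4) quasi_eq_connected_components_of by (auto simp: quasi_components_of_def)
  then have "connectedin T (quasi_component_of_set T x)"
    by (rule connectedin_connected_components_of)
  moreover have "x \<in> quasi_component_of_set T x"
    using assms(4) by simp
  ultimately have "quasi_component_of_set T x = {x}"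
    using assms(3) unfolding totally_disconnected_space_def by blast
  moreover have "quasi_component_of_set T x \<in> quasi_components_of T"
    using assms(4) by (simp add: quasi_components_of_def)
  ultimately have "separated_between T {x} F"
    using separated_between_quasi_component_compact assms(5,6) by fastforce
  then obtain C V where C: "openin T C" "x \<in> C" and V: "openin T V" "F \<subseteq> V"
    and "C \<union> V = topspace T" "disjnt C V"
    unfolding separated_between_def by blast
  then have "C = topspace T - V"
    by (auto simp: disjnt_def)
  with C V that show thesis
    by auto
qed

lemma (in group) inv_mult_cancel [simp]:
  "x \<in> carrier G \<Longrightarrow> y \<in> carrier G \<Longrightarrow> inv x \<otimes> (x \<otimes> y) = y"
  and mult_inv_cancel [simp]:
  "x \<in> carrier G \<Longrightarrow> y \<in> carrier G \<Longrightarrow> x \<otimes> (inv x \<otimes> y) = y"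
  by (simp_all add: m_assoc[symmetric])

lemma topological_group_group: "topological_group G T \<Longrightarrow> group G"
  and topological_group_topspace: "topological_group G T \<Longrightarrow> topspace T = carrier G"
  by (simp_all add: topological_group_def)

lemma continuous_map_group_mult:
  assumes "topological_group G T" "continuous_map S T f" "continuous_map S T g"
  shows "continuous_map S T (\<lambda>x. f x \<otimes>\<^bsub>G\<^esub> g x)"
proof -
  have "continuous_map S (prod_topology T T) (\<lambda>x. (f x, g x))"
    using assms(2,3) by (simp add: continuous_map_pairedI)
  moreover have "continuous_map (prod_topology T T) T (\<lambda>(x, y). x \<otimes>\<^bsub>G\<^esub> y)"
    using assms(1) by (simp add: topological_group_def)
  ultimately show ?thesis
    using continuous_map_compose[of S "prod_topology T T" "\<lambda>x. (f x, g x)" T "\<lambda>(x, y). x \<otimes>\<^bsub>G\<^esub> y"]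
    by (simp add: o_def)
qed

lemma set_mult_eq_image: "A <#>\<^bsub>G\<^esub> B = (\<lambda>(a, b). a \<otimes>\<^bsub>G\<^esub> b) ` (A \<times> B)"
  by (auto simp: set_mult_def)

lemma set_mult3_iff:
  "x \<in> A <#>\<^bsub>G\<^esub> B <#>\<^bsub>G\<^esub> C \<longleftrightarrow> (\<exists>a\<in>A. \<exists>b\<in>B. \<exists>c\<in>C. x = a \<otimes>\<^bsub>G\<^esub> b \<otimes>\<^bsub>G\<^esub> c)"
  unfolding set_mult_def by blast

lemma compactin_set_mult:
  assumes "topological_group G T" "compactin T A" "compactin T B"
  shows "compactin T (A <#>\<^bsub>G\<^esub> B)"
  unfolding set_mult_eq_image
proof (rule image_compactin)
  show "compactin (prod_topology T T) (A \<times> B)"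
    using assms(2,3) by (simp add: compactin_Times)
  show "continuous_map (prod_topology T T) T (\<lambda>(a, b). a \<otimes>\<^bsub>G\<^esub> b)"
    using assms(1) by (simp add: topological_group_def)
qed

lemma openin_set_mult3:
  fixes G (structure)
  assumes "topological_group G T" "A \<subseteq> carrier G" "B \<subseteq> carrier G" "openin T C"
  shows "openin T (A <#> C <#> B)"
proof -
  interpret group G using assms(1) by (rule topological_group_group)
  have top: "topspace T = carrier G"
    using assms(1) by (rule topological_group_topspace)
  have "C \<subseteq> carrier G"
    using assms(4) openin_subset top by blast
  have "A <#> C <#> B = (\<Union>(a, b)\<in>A \<times> B. {x \<in> topspace T. inv a \<otimes> x \<otimes> inv b \<in> C})"
  proof (intro Set.set_eqI iffI)
    fix x assume "x \<in> A <#> C <#> B"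
    then obtain a c b where abc: "a \<in> A" "c \<in> C" "b \<in> B" and x: "x = a \<otimes> c \<otimes> b"
      unfolding set_mult3_iff by blast
    have "a \<in> carrier G" "c \<in> carrier G" "b \<in> carrier G"
      using abc assms(2,3) \<open>C \<subseteq> carrier G\<close> by blast+
    then have "inv a \<otimes> x \<otimes> inv b = c" and "x \<in> topspace T"
      unfolding x top by (simp_all add: m_assoc)
    with abc show "x \<in> (\<Union>(a, b)\<in>A \<times> B. {x \<in> topspace T. inv a \<otimes> x \<otimes> inv b \<in> C})"
      by auto
  next
    fix x assume "x \<in> (\<Union>(a, b)\<in>A \<times> B. {x \<in> topspace T. inv a \<otimes> x \<otimes> inv b \<in> C})"
    then obtain a b where ab: "a \<in> A" "b \<in> B" and "x \<in> carrier G" "inv a \<otimes> x \<otimes> inv b \<in> C"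
      using top by auto
    moreover have "a \<in> carrier G" "b \<in> carrier G"
      using ab assms(2,3) by blast+
    ultimately have "x = a \<otimes> (inv a \<otimes> x \<otimes> inv b) \<otimes> b"
      by (simp add: m_assoc)
    with ab \<open>inv a \<otimes> x \<otimes> inv b \<in> C\<close> show "x \<in> A <#> C <#> B"
      unfolding set_mult3_iff by blast
  qed
  moreover have "openin T {x \<in> topspace T. inv a \<otimes> x \<otimes> inv b \<in> C}"
    if "a \<in> A" "b \<in> B" for a b
  proof (rule openin_continuous_map_preimage[OF _ assms(4)])
    show "continuous_map T T (\<lambda>x. inv a \<otimes> x \<otimes> inv b)"
      using that assms(2,3) top by (intro continuous_map_group_mult[OF assms(1)]) auto
  qed
  ultimately show ?thesis
    by (simp only:) (intro openin_Union; auto)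
qed

definition left_stabilizer :: "('a, 'm) monoid_scheme \<Rightarrow> 'a set \<Rightarrow> 'a set" where
  "left_stabilizer G D = {g \<in> carrier G. \<forall>x\<in>carrier G. x \<in> D \<longleftrightarrow> g \<otimes>\<^bsub>G\<^esub> x \<in> D}"

lemma (in group) subgroup_left_stabilizer: "subgroup (left_stabilizer G D) G"
proof (rule subgroupI)
  show "left_stabilizer G D \<subseteq> carrier G" "left_stabilizer G D \<noteq> {}"
    by (auto simp: left_stabilizer_def)
next
  fix g assume "g \<in> left_stabilizer G D"
  then have gc: "g \<in> carrier G" and stab: "\<And>x. x \<in> carrier G \<Longrightarrow> x \<in> D \<longleftrightarrow> g \<otimes> x \<in> D"
    by (auto simp: left_stabilizer_def)
  have "x \<in> D \<longleftrightarrow> inv g \<otimes> x \<in> D" if "x \<in> carrier G" for x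
    using stab[of "inv g \<otimes> x"] that gc by (simp add: m_assoc[symmetric])
  then show "inv g \<in> left_stabilizer G D"
    using gc unfolding left_stabilizer_def by blast
next
  fix g h assume "g \<in> left_stabilizer G D" "h \<in> left_stabilizer G D"
  then have gc: "g \<in> carrier G" and hc: "h \<in> carrier G"
    and "\<And>x. x \<in> carrier G \<Longrightarrow> x \<in> D \<longleftrightarrow> g \<otimes> x \<in> D"
    and "\<And>x. x \<in> carrier G \<Longrightarrow> x \<in> D \<longleftrightarrow> h \<otimes> x \<in> D"
    unfolding left_stabilizer_def by blast+
  with gc hc have "x \<in> D \<longleftrightarrow> g \<otimes> h \<otimes> x \<in> D" if "x \<in> carrier G" for x
    using that by (metis m_assoc m_closed)
  then show "g \<otimes> h \<in> left_stabilizer G D"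
    using gc hc unfolding left_stabilizer_def by blast
qed

lemma (in group) subgroup_subset_left_stabilizer:
  assumes "subgroup S G" "D \<subseteq> carrier G" "\<And>s x. s \<in> S \<Longrightarrow> x \<in> D \<Longrightarrow> s \<otimes> x \<in> D"
  shows "S \<subseteq> left_stabilizer G D"
proof
  fix s assume s: "s \<in> S"
  have sc: "s \<in> carrier G" and "inv s \<in> S"
    using s assms(1) by (auto simp: subgroup.mem_carrier subgroup.m_inv_closed)
  then have "s \<otimes> x \<in> D \<Longrightarrow> x \<in> D" if "x \<in> carrier G" for x
    using assms(3)[of "inv s" "s \<otimes> x"] that by (simp add: m_assoc[symmetric])
  then show "s \<in> left_stabilizer G D"
    using s sc assms(3) unfolding left_stabilizer_def by blast
qed

lemma openin_left_stabilizer: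
  fixes G (structure)
  assumes tg: "topological_group G T" and "compact_space T" "Hausdorff_space T"
    and "openin T D" "closedin T D"
  shows "openin T (left_stabilizer G D)"
proof -
  have top: "topspace T = carrier G"
    using tg by (rule topological_group_topspace)
  \<comment> \<open>The complement of the stabilizer is the projection of the compact set \<open>P\<close> of all
    pairs \<open>(g, x)\<close> such that exactly one of \<open>x\<close> and \<open>g x\<close> lies in \<open>D\<close>.\<close>
  define E where "E = D \<times> (topspace T - D) \<union> (topspace T - D) \<times> D"
  define P where "P = {p \<in> topspace (prod_topology T T). (snd p, fst p \<otimes> snd p) \<in> E}"
  have "continuous_map (prod_topology T T) (prod_topology T T) (\<lambda>p. (snd p, fst p \<otimes> snd p))"
    by (intro continuous_map_pairedI continuous_map_group_mult[OF tg] continuous_map_fst continuous_map_snd)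
  moreover have "closedin (prod_topology T T) E"
    using assms(4,5) unfolding E_def by (intro closedin_Un) (auto simp: closedin_prod_Times_iff)
  ultimately have "closedin (prod_topology T T) P"
    unfolding P_def by (rule closedin_continuous_map_preimage)
  then have "compactin (prod_topology T T) P"
    using assms(2) by (simp add: closedin_compact_space compact_space_prod_topology)
  then have "compactin T (fst ` P)"
    using continuous_map_fst by (rule image_compactin)
  then have "closedin T (fst ` P)"
    by (rule compactin_imp_closedin[OF assms(3)])
  moreover have "left_stabilizer G D = topspace T - fst ` P"
    using top monoid.m_closed[OF group.is_monoid[OF topological_group_group[OF tg]]]
    by ((auto simp: left_stabilizer_def P_def E_def image_iff); blast)
  ultimately show ?thesis
    by auto
qed

lemma open_subgroup_avoiding_finite:
  fixes G (structure)
  assumes pg: "profinite_group G T" and S: "subgroup S G" "compactin T S"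
    and K: "finite K" "K \<subseteq> carrier G" "K \<inter> S = {}"
  obtains V where "subgroup V G" "openin T V" "S \<subseteq> V" "V \<inter> K = {}"
proof -
  have tg: "topological_group G T" and cpt: "compact_space T" and hs: "Hausdorff_space T"
    and td: "totally_disconnected_space T"
    using pg by (auto simp: profinite_group_def)
  interpret group G
    using tg by (rule topological_group_group)
  have top: "topspace T = carrier G"
    using tg by (rule topological_group_topspace)
  have Sc: "S \<subseteq> carrier G"
    using S(1) by (rule subgroup.subset)
  have inv_S: "inv a \<in> S" if "a \<in> S" for a
    using S(1) that by (rule subgroup.m_inv_closed)
  have cF: "compactin T (S <#> K <#> S)"
    using K(1,2) top by (intro compactin_set_mult[OF tg] S(2) finite_imp_compactin) auto
  have oneF: "\<one> \<notin> S <#> K <#> S"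
  proof
    assume "\<one> \<in> S <#> K <#> S"
    then obtain a k b where akb: "a \<in> S" "k \<in> K" "b \<in> S" and one: "\<one> = a \<otimes> k \<otimes> b"
      unfolding set_mult3_iff by blast
    have abk: "a \<in> carrier G" "k \<in> carrier G" "b \<in> carrier G"
      using akb Sc K(2) by blast+
    then have "inv a \<otimes> inv b = inv a \<otimes> (a \<otimes> k \<otimes> b) \<otimes> inv b"
      by (simp add: one[symmetric])
    also have "\<dots> = k"
      using abk by (simp add: m_assoc)
    finally have "k \<in> S"
      using subgroup.m_closed[OF S(1) inv_S[OF akb(1)] inv_S[OF akb(3)]] by simp
    with akb K(3) show False
      by blast
  qed
  \<comment> \<open>\<open>V\<close> is the stabilizer of the clopen set \<open>S C S\<close>, where the clopen neighbourhood
    \<open>C\<close> of \<open>1\<close> misses \<open>S K S\<close>.\<close>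
  have "\<one> \<in> topspace T"
    using top by simp
  then obtain C where C: "openin T C" "closedin T C" "\<one> \<in> C"
    and CK: "C \<inter> (S <#> K <#> S) = {}"
    by (rule clopen_separating_compact[OF cpt hs td _ cF oneF])
  have Cc: "C \<subseteq> carrier G"
    using C(1) top openin_subset by blast
  define D where "D = S <#> C <#> S"
  have Dc: "D \<subseteq> carrier G"
    unfolding D_def using Sc Cc by (intro set_mult_closed)
  have "openin T D"
    unfolding D_def by (rule openin_set_mult3[OF tg Sc Sc C(1)])
  moreover have "closedin T D"
    unfolding D_def using closedin_compact_space[OF cpt C(2)]
    by (intro compactin_imp_closedin[OF hs] compactin_set_mult[OF tg] S(2))
  ultimately have oV: "openin T (left_stabilizer G D)"
    by (rule openin_left_stabilizer[OF tg cpt hs])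
  have SV: "S \<subseteq> left_stabilizer G D"
  proof (rule subgroup_subset_left_stabilizer[OF S(1) Dc])
    fix s x assume "s \<in> S" "x \<in> D"
    then obtain a c b where sacb: "s \<in> S" "a \<in> S" "c \<in> C" "b \<in> S" and x: "x = a \<otimes> c \<otimes> b"
      unfolding D_def set_mult3_iff by blast
    then have "s \<otimes> x = (s \<otimes> a) \<otimes> c \<otimes> b"
      using Sc Cc by (simp add: subset_iff m_assoc)
    moreover have "s \<otimes> a \<in> S"
      using sacb S(1) by (simp add: subgroup.m_closed)
    ultimately show "s \<otimes> x \<in> D"
      unfolding D_def set_mult3_iff using sacb by blast
  qed
  have "g \<notin> K" if g: "g \<in> left_stabilizer G D" for g
  proof
    assume "g \<in> K"
    have "\<one> = \<one> \<otimes> \<one> \<otimes> \<one>"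
      by simp
    then have "\<one> \<in> D"
      unfolding D_def set_mult3_iff using C(3) subgroup.one_closed[OF S(1)] by blast
    moreover have gc: "g \<in> carrier G" and "\<one> \<in> D \<longleftrightarrow> g \<otimes> \<one> \<in> D"
      using g unfolding left_stabilizer_def by blast+
    ultimately have "g \<in> D"
      by simp
    then obtain a c b where acb: "a \<in> S" "c \<in> C" "b \<in> S" and "g = a \<otimes> c \<otimes> b"
      unfolding D_def set_mult3_iff by blast
    then have "c = inv a \<otimes> g \<otimes> inv b"
      using Sc Cc gc by (simp add: subset_iff m_assoc)
    then have "c \<in> S <#> K <#> S"
      unfolding set_mult3_iff using inv_S[OF acb(1)] inv_S[OF acb(3)] \<open>g \<in> K\<close> by blast
    with acb CK show False
      by blast
  qed
  then have "left_stabilizer G D \<inter> K = {}"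
    by blast
  with oV SV show thesis
    by (rule that[OF subgroup_left_stabilizer])
qed

lemma (in group_hom) inj_on_subgroup_if_kernel_trivial:
  assumes "subgroup V G" "V \<inter> kernel G H h \<subseteq> {\<one>}"
  shows "inj_on h V"
proof -
  have "kernel (G\<lparr>carrier := V\<rparr>) H h = {\<one>}"
    using assms subgroup.one_closed[OF assms(1)] subgroup.mem_carrier[OF assms(1)]
    by (auto simp: kernel_def)
  then show ?thesis
    using inj_on_subgroup_iff_trivial_ker[OF assms(1)] by simp
qed

lemma (in group_hom) inv_into_hom_image:
  assumes "subgroup V G" "inj_on h V"
  shows "inv_into V h \<in> hom (H\<lparr>carrier := h ` V\<rparr>) G"
proof (rule homI)
  fix y assume "y \<in> carrier (H\<lparr>carrier := h ` V\<rparr>)"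
  then show "inv_into V h y \<in> carrier G"
    using inv_into_into[of y h V] subgroup.subset[OF assms(1)] by auto
next
  fix x y assume "x \<in> carrier (H\<lparr>carrier := h ` V\<rparr>)" "y \<in> carrier (H\<lparr>carrier := h ` V\<rparr>)"
  then obtain a b where ab: "a \<in> V" "b \<in> V" and "x = h a" "y = h b"
    by auto
  moreover have "a \<otimes> b \<in> V" "a \<in> carrier G" "b \<in> carrier G"
    using ab assms(1) by (auto simp: subgroup.m_closed subgroup.mem_carrier)
  ultimately show "inv_into V h (x \<otimes>\<^bsub>H\<lparr>carrier := h ` V\<rparr>\<^esub> y) = inv_into V h x \<otimes> inv_into V h y"
    using assms(2) by (simp add: inv_into_f_f flip: hom_mult)
qed

lemma continuous_map_inv_into_open_map:
  assumes "open_map S T f" "openin S V" "inj_on f V"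
  shows "continuous_map (subtopology T (f ` V)) S (inv_into V f)"
  unfolding continuous_map
proof (intro conjI allI impI)
  have "openin T (f ` V)"
    using assms(1,2) by (simp add: open_map_def)
  then have top: "topspace (subtopology T (f ` V)) = f ` V"
    by (simp add: openin_subset Int_absorb1)
  show "inv_into V f ` topspace (subtopology T (f ` V)) \<subseteq> topspace S"
    unfolding top using inv_into_into[of _ f V] openin_subset[OF assms(2)] by blast
  fix W assume "openin S W"
  have "{y \<in> topspace (subtopology T (f ` V)). inv_into V f y \<in> W} = f ` (V \<inter> W)"
    unfolding top using assms(3) by (auto simp: inv_into_f_f intro: inv_into_into)
  moreover have "openin T (f ` (V \<inter> W))"
    using assms(1,2) \<open>openin S W\<close> by (simp add: open_map_def openin_Int)
  ultimately show "openin (subtopology T (f ` V)) {y \<in> topspace (subtopology T (f ` V)). inv_into V f y \<in> W}"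
    by (auto simp: openin_subtopology)
qed

theorem lemma4p3:
  fixes G0 :: "'a monoid" and T0 :: "'a topology"
    and G1 :: "'b monoid" and T1 :: "'b topology"
    and \<delta> :: "'a \<Rightarrow> 'b" and H :: "'b set" and \<rho> :: "'b \<Rightarrow> 'a"
  assumes "profinite_group G0 T0" and "profinite_group G1 T1"
    and "\<delta> \<in> hom G0 G1" and "continuous_map T0 T1 \<delta>" and "open_map T0 T1 \<delta>"
    and "finite (kernel G0 G1 \<delta>)"
    and "subgroup H G1" and "closedin T1 H"
    and "\<rho> \<in> hom (G1\<lparr>carrier := H\<rparr>) G0" and "continuous_map (subtopology T1 H) T0 \<rho>"
    and "\<forall>x\<in>H. \<delta> (\<rho> x) = x"
  shows "\<exists>U \<rho>'. subgroup U G1 \<and> openin T1 U \<and> H \<subseteq> U \<and>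
           \<rho>' \<in> hom (G1\<lparr>carrier := U\<rparr>) G0 \<and> continuous_map (subtopology T1 U) T0 \<rho>' \<and>
           (\<forall>x\<in>H. \<rho>' x = \<rho> x) \<and> (\<forall>x\<in>U. \<delta> (\<rho>' x) = x)"
proof -
  have "group G0" "group G1" "compact_space T1"
    using assms(1,2) by (auto simp: profinite_group_def intro: topological_group_group)
  interpret \<delta>: group_hom G0 G1 \<delta>
    using \<open>group G0\<close> \<open>group G1\<close> assms(3) by (simp add: group_hom_def group_hom_axioms_def)
  interpret \<rho>: group_hom "G1\<lparr>carrier := H\<rparr>" G0 \<rho>
    using subgroup.subgroup_is_group[OF assms(7) \<open>group G1\<close>] \<open>group G0\<close> assms(9)
    by (simp add: group_hom_def group_hom_axioms_def)
  have "compactin T0 (\<rho> ` H)"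
    using closedin_compact_space[OF \<open>compact_space T1\<close> assms(8)] assms(10)
    by (intro image_compactin) (auto simp: compactin_subtopology)
  moreover have "(kernel G0 G1 \<delta> - {\<one>\<^bsub>G0\<^esub>}) \<inter> \<rho> ` H = {}"
    using assms(11) \<rho>.hom_one by (force simp: kernel_def)
  ultimately obtain V where V: "subgroup V G0" "openin T0 V" "\<rho> ` H \<subseteq> V"
    and V_ker: "V \<inter> (kernel G0 G1 \<delta> - {\<one>\<^bsub>G0\<^esub>}) = {}"
    using open_subgroup_avoiding_finite[OF assms(1), where S = "\<rho> ` H" and K = "kernel G0 G1 \<delta> - {\<one>\<^bsub>G0\<^esub>}"]
      \<rho>.img_is_subgroup assms(6) by (auto simp: kernel_def)
  have inj: "inj_on \<delta> V"
    using V(1) V_ker by (intro \<delta>.inj_on_subgroup_if_kernel_trivial) auto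
  show ?thesis
  proof (intro exI conjI)
    show "subgroup (\<delta> ` V) G1"
      by (rule \<delta>.subgroup_img_is_subgroup[OF V(1)])
    show "openin T1 (\<delta> ` V)"
      using assms(5) V(2) by (simp add: open_map_def)
    show "H \<subseteq> \<delta> ` V"
      using V(3) assms(11) by force
    show "inv_into V \<delta> \<in> hom (G1\<lparr>carrier := \<delta> ` V\<rparr>) G0"
      by (rule \<delta>.inv_into_hom_image[OF V(1) inj])
    show "continuous_map (subtopology T1 (\<delta> ` V)) T0 (inv_into V \<delta>)"
      by (rule continuous_map_inv_into_open_map[OF assms(5) V(2) inj])
    show "\<forall>x\<in>H. inv_into V \<delta> x = \<rho> x"
      using V(3) assms(11) inj by (metis image_subset_iff inv_into_f_f)
    show "\<forall>x\<in>\<delta> ` V. \<delta> (inv_into V \<delta> x) = x"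
      by (simp add: f_inv_into_f)
  qed
qed

end
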